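(* Let $\mathcal{A}$ be a Fréchet algebra and $\mathcal{U}$ a countably incomplete ultrafilter on an index set $I$. Then the ultrapower $(\mathcal{A})_{\mathcal{U}}$ is unital if and only if $\mathcal{A}$ is unital.
   Context: A Fréchet algebra $(\mathcal{A},(P_n))$ is a complete topological algebra whose topology is given by an increasing sequence of submultiplicative seminorms. For a countably incomplete ultrafilter $\mathcal{U}$ on $I$ (i.e. there are $U_1\supseteq U_2\supseteq\cdots$ in $\mathcal{U}$ with empty intersection), the ultrapower $(\mathcal{A})_{\mathcal{U}}$ is $\ell_\infty(I,\mathcal{A})/\mathcal{N}_{\mathcal{U}}$, where $\ell_\infty(I,\mathcal{A})=\{(x_i)\in\prod_I\mathcal{A}:\sup_iP_n(x_i)<\infty\ \forall n\}$ and $\mathcal{N}_{\mathcal{U}}=\{(x_i):\lim_{\mathcal{U}}P_n(x_i)=0\ \forall n\}$, with seminorms $Q'_n((x_i)_{\mathcal{U}})=\lim_{\mathcal{U}}P_n(x_i)$ and coordinatewise product; it is a Fréchet algebra. *)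

theory Defs
  imports "HOL-Analysis.Analysis"
begin

definition frechet_algebra :: "(nat \<Rightarrow> 'a::real_algebra \<Rightarrow> real) \<Rightarrow> bool" where
  "frechet_algebra P \<longleftrightarrow>
     (\<forall>n x y. P n (x + y) \<le> P n x + P n y) \<and>
     (\<forall>n c x. P n (c *\<^sub>R x) = \<bar>c\<bar> * P n x) \<and>
     (\<forall>n x y. P n (x * y) \<le> P n x * P n y) \<and>
     (\<forall>n x. P n x \<le> P (Suc n) x) \<and>
     (\<forall>x. (\<forall>n. P n x = 0) \<longrightarrow> x = 0) \<and>
     (\<forall>X :: nat \<Rightarrow> 'a.
        (\<forall>n. \<forall>e>0. \<exists>N. \<forall>m\<ge>N. \<forall>k\<ge>N. P n (X m - X k) < e) \<longrightarrow>
        (\<exists>L. \<forall>n. (\<lambda>m. P n (X m - L)) \<longlonglongrightarrow> 0))"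

definition algebra_unital :: "'a::real_algebra itself \<Rightarrow> bool" where
  "algebra_unital TYPE('a) \<longleftrightarrow> (\<exists>e::'a. \<forall>x. e * x = x \<and> x * e = x)"

definition is_ultrafilter :: "'i filter \<Rightarrow> bool" where
  "is_ultrafilter U \<longleftrightarrow> U \<noteq> bot \<and>
     (\<forall>A. eventually (\<lambda>i. i \<in> A) U \<or> eventually (\<lambda>i. i \<notin> A) U)"

definition countably_incomplete :: "'i filter \<Rightarrow> bool" where
  "countably_incomplete U \<longleftrightarrow>
     (\<exists>W :: nat \<Rightarrow> 'i set. (\<forall>n. eventually (\<lambda>i. i \<in> W n) U) \<and>
        (\<forall>n. W (Suc n) \<subseteq> W n) \<and> (\<Inter>n. W n) = {})"

text \<open>ell-infinity(I, A), with the index set I being the universe of type 'i.\<close>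
definition ell_inf :: "(nat \<Rightarrow> 'a::real_algebra \<Rightarrow> real) \<Rightarrow> ('i \<Rightarrow> 'a) set" where
  "ell_inf P = {x. \<forall>n. bdd_above (range (\<lambda>i. P n (x i)))}"

definition null_U :: "(nat \<Rightarrow> 'a::real_algebra \<Rightarrow> real) \<Rightarrow> 'i filter \<Rightarrow> ('i \<Rightarrow> 'a) set" where
  "null_U P U = {x \<in> ell_inf P. \<forall>n. ((\<lambda>i. P n (x i)) \<longlongrightarrow> 0) U}"

definition ultra_rel :: "(nat \<Rightarrow> 'a::real_algebra \<Rightarrow> real) \<Rightarrow> 'i filter \<Rightarrow> (('i \<Rightarrow> 'a) \<times> ('i \<Rightarrow> 'a)) set" where
  "ultra_rel P U = {(x, y). x \<in> ell_inf P \<and> y \<in> ell_inf P \<and> (\<lambda>i. x i - y i) \<in> null_U P U}"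

definition ultrapower :: "(nat \<Rightarrow> 'a::real_algebra \<Rightarrow> real) \<Rightarrow> 'i filter \<Rightarrow> ('i \<Rightarrow> 'a) set set" where
  "ultrapower P U = ell_inf P // ultra_rel P U"

definition ultra_mult :: "(nat \<Rightarrow> 'a::real_algebra \<Rightarrow> real) \<Rightarrow> 'i filter \<Rightarrow>
     ('i \<Rightarrow> 'a) set \<Rightarrow> ('i \<Rightarrow> 'a) set \<Rightarrow> ('i \<Rightarrow> 'a) set" where
  "ultra_mult P U X Y = ultra_rel P U `` {(\<lambda>i. x i * y i) | x y. x \<in> X \<and> y \<in> Y}"

definition ultrapower_unital :: "(nat \<Rightarrow> 'a::real_algebra \<Rightarrow> real) \<Rightarrow> 'i filter \<Rightarrow> bool" where
  "ultrapower_unital P U \<longleftrightarrow>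
     (\<exists>E \<in> ultrapower P U. \<forall>X \<in> ultrapower P U.
        ultra_mult P U E X = X \<and> ultra_mult P U X E = X)"

end

theory Submission imports Defs begin

(* All analysis is phrased through one notion: a family f indexed by I is U-null if
   P n (f i) tends to 0 along U for every seminorm P n.  Two bounded families are
   identified in the ultrapower iff their difference is U-null, and this relation is a
   congruence for the coordinatewise product, so the product of two classes is the class
   of the product of representatives.

   If u is a unit of A, the class of the constant family u is therefore a unit of the
   ultrapower.  Conversely, a representative e of a unit class is an approximate unit:
   e y - y and y e - y are U-null for every bounded y.  Testing this on the reindexed
   families y (J i), where J i picks a worst index, makes the approximation uniform; hence
   e is Cauchy along U, converges along U to some L by completeness of A, and L is a unit. *)

lemma ell_inf_const: "(\<lambda>i. c) \<in> ell_inf P"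
  unfolding ell_inf_def by simp

lemma ell_inf_reindex:
  assumes "y \<in> ell_inf P"
  shows "(\<lambda>i. y (J i)) \<in> ell_inf P"
  unfolding ell_inf_def
proof (intro CollectI allI)
  fix n
  show "bdd_above (range (\<lambda>i. P n (y (J i))))"
    by (rule bdd_above_mono[of "range (\<lambda>i. P n (y i))"]) (use assms in \<open>auto simp: ell_inf_def\<close>)
qed

context
  fixes P :: "nat \<Rightarrow> 'a::real_algebra \<Rightarrow> real"
  assumes fa: "frechet_algebra P"
begin

lemma sn_add: "P n (x + y) \<le> P n x + P n y"
  using fa unfolding frechet_algebra_def by simp

lemma sn_scale: "P n (c *\<^sub>R x) = \<bar>c\<bar> * P n x"
  using fa unfolding frechet_algebra_def by simp

lemma sn_mult: "P n (x * y) \<le> P n x * P n y"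
  using fa unfolding frechet_algebra_def by simp

lemma sn_suc: "P n x \<le> P (Suc n) x"
  using fa unfolding frechet_algebra_def by simp

lemma sn_mono: "n \<le> m \<Longrightarrow> P n x \<le> P m x"
  using lift_Suc_mono_le[of "\<lambda>k. P k x"] sn_suc by blast

lemma sn_separating: "(\<And>n. P n x = 0) \<Longrightarrow> x = 0"
  using fa unfolding frechet_algebra_def by simp

lemma sn_complete:
  assumes "\<And>n \<epsilon>. \<epsilon> > 0 \<Longrightarrow> \<exists>N. \<forall>m\<ge>N. \<forall>k\<ge>N. P n (X m - X k) < \<epsilon>"
  shows "\<exists>L. \<forall>n. (\<lambda>m. P n (X m - L)) \<longlonglongrightarrow> 0"
  using fa assms unfolding frechet_algebra_def by simp

lemma sn_zero [simp]: "P n 0 = 0"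
  using sn_scale[of n 0 0] by simp

lemma sn_minus: "P n (- x) = P n x"
  using sn_scale[of n "-1" x] by simp

lemma sn_nonneg: "0 \<le> P n x"
  using sn_add[of n x "- x"] by (simp add: sn_minus)

lemma sn_diff_commute: "P n (x - y) = P n (y - x)"
  using sn_minus[of n "x - y"] by simp

lemma sn_diff_triangle: "P n (x - z) \<le> P n (x - y) + P n (y - z)"
  using sn_add[of n "x - y" "y - z"] by simp

lemma ell_inf_diff:
  assumes "x \<in> ell_inf P" "y \<in> ell_inf P"
  shows "(\<lambda>i. x i - y i) \<in> ell_inf P"
  unfolding ell_inf_def bdd_above_def
proof (intro CollectI allI)
  fix n
  obtain A B where "\<forall>i. P n (x i) \<le> A" "\<forall>i. P n (y i) \<le> B"
    using assms unfolding ell_inf_def bdd_above_def by blast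
  then have "\<forall>i. P n (x i - y i) \<le> A + B"
    using sn_add[of n] sn_minus[of n] by (smt (verit) diff_conv_add_uminus)
  then show "\<exists>M. \<forall>r\<in>range (\<lambda>i. P n (x i - y i)). r \<le> M" by blast
qed

lemma ell_inf_mult:
  assumes "x \<in> ell_inf P" "y \<in> ell_inf P"
  shows "(\<lambda>i. x i * y i) \<in> ell_inf P"
  unfolding ell_inf_def bdd_above_def
proof (intro CollectI allI)
  fix n
  obtain A B where "\<forall>i. P n (x i) \<le> A" "\<forall>i. P n (y i) \<le> B"
    using assms unfolding ell_inf_def bdd_above_def by blast
  then have "\<forall>i. P n (x i * y i) \<le> A * B"
    using sn_mult[of n] sn_nonneg[of n] by (meson mult_mono order_trans)
  then show "\<exists>M. \<forall>r\<in>range (\<lambda>i. P n (x i * y i)). r \<le> M" by blast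
qed

definition null_along :: "'i filter \<Rightarrow> ('i \<Rightarrow> 'a) \<Rightarrow> bool" where
  "null_along U f \<longleftrightarrow> (\<forall>n \<epsilon>. \<epsilon> > 0 \<longrightarrow> eventually (\<lambda>i. P n (f i) < \<epsilon>) U)"

lemma null_alongD: "null_along U f \<Longrightarrow> \<epsilon> > 0 \<Longrightarrow> eventually (\<lambda>i. P n (f i) < \<epsilon>) U"
  unfolding null_along_def by blast

lemma null_along_add:
  assumes "null_along U f" "null_along U g"
  shows "null_along U (\<lambda>i. f i + g i)"
  unfolding null_along_def
proof (intro allI impI)
  fix n and \<epsilon> :: real
  assume "\<epsilon> > 0"
  then have "eventually (\<lambda>i. P n (f i) < \<epsilon>/2 \<and> P n (g i) < \<epsilon>/2) U"
    by (intro eventually_conj null_alongD[OF assms(1)] null_alongD[OF assms(2)]) simp_all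
  then show "eventually (\<lambda>i. P n (f i + g i) < \<epsilon>) U"
  proof (rule eventually_mono)
    fix i assume "P n (f i) < \<epsilon>/2 \<and> P n (g i) < \<epsilon>/2"
    then show "P n (f i + g i) < \<epsilon>"
      using sn_add[of n "f i" "g i"] by linarith
  qed
qed

lemma null_along_minus: "null_along U f \<Longrightarrow> null_along U (\<lambda>i. - f i)"
  by (simp add: null_along_def sn_minus)

lemma null_along_mult_bounded:
  assumes d: "null_along U d" and z: "z \<in> ell_inf P"
  shows "null_along U (\<lambda>i. d i * z i)" "null_along U (\<lambda>i. z i * d i)"
proof -
  have "eventually (\<lambda>i. P n (d i * z i) < \<epsilon> \<and> P n (z i * d i) < \<epsilon>) U"
    if \<epsilon>: "\<epsilon> > 0" for n \<epsilon>
  proof -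
    obtain B where "\<forall>i. P n (z i) \<le> B"
      using z unfolding ell_inf_def bdd_above_def by blast
    then have C: "\<forall>i. P n (z i) \<le> max B 1" "max B 1 > 0"
      by (auto intro: max.coboundedI1)
    have "eventually (\<lambda>i. P n (d i) < \<epsilon> / max B 1) U"
      using null_alongD[OF d] C \<epsilon> by simp
    then show ?thesis
    proof (rule eventually_mono)
      fix i assume small: "P n (d i) < \<epsilon> / max B 1"
      have "P n (d i) * P n (z i) \<le> P n (d i) * max B 1"
        using C sn_nonneg by (simp add: mult_left_mono)
      also have "\<dots> < \<epsilon>"
        using small C(2) by (simp add: pos_less_divide_eq)
      finally show "P n (d i * z i) < \<epsilon> \<and> P n (z i * d i) < \<epsilon>"
        using sn_mult[of n "d i" "z i"] sn_mult[of n "z i" "d i"] by (simp add: mult.commute)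
    qed
  qed
  then show "null_along U (\<lambda>i. d i * z i)" "null_along U (\<lambda>i. z i * d i)"
    unfolding null_along_def eventually_conj_iff by blast+
qed

lemma null_along_const:
  assumes U: "U \<noteq> bot" and null: "null_along U (\<lambda>i. c)"
  shows "c = 0"
proof (rule sn_separating)
  fix n
  have "\<not> P n c > 0"
  proof
    assume "P n c > 0"
    then have "eventually (\<lambda>i. P n c < P n c) U"
      by (rule null_alongD[OF null])
    with U show False
      by (simp add: eventually_const_iff)
  qed
  then show "P n c = 0"
    using sn_nonneg[of n c] by linarith
qed

lemma null_along_iff_tendsto: "null_along U f \<longleftrightarrow> (\<forall>n. ((\<lambda>i. P n (f i)) \<longlongrightarrow> 0) U)"
  by (simp add: null_along_def tendsto_iff dist_real_def abs_of_nonneg sn_nonneg)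

lemma ultra_rel_iff:
  "(x, y) \<in> ultra_rel P U \<longleftrightarrow>
     x \<in> ell_inf P \<and> y \<in> ell_inf P \<and> null_along U (\<lambda>i. x i - y i)"
  using ell_inf_diff[of x y] by (auto simp: ultra_rel_def null_U_def null_along_iff_tendsto)

lemma ultra_rel_equiv: "equiv (ell_inf P) (ultra_rel P U)"
proof (rule equivI)
  show "ultra_rel P U \<subseteq> ell_inf P \<times> ell_inf P"
    by (auto simp: ultra_rel_iff)
  show "refl_on (ell_inf P) (ultra_rel P U)"
    by (rule refl_onI) (auto simp: ultra_rel_iff null_along_def)
  show "sym (ultra_rel P U)"
    by (rule symI) (simp add: ultra_rel_iff null_along_def sn_diff_commute)
  show "trans (ultra_rel P U)"
  proof (rule transI)
    fix x y z
    assume "(x, y) \<in> ultra_rel P U" "(y, z) \<in> ultra_rel P U"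
    then have "null_along U (\<lambda>i. (x i - y i) + (y i - z i))"
      by (intro null_along_add) (simp_all add: ultra_rel_iff)
    with \<open>(x, y) \<in> ultra_rel P U\<close> \<open>(y, z) \<in> ultra_rel P U\<close>
    show "(x, z) \<in> ultra_rel P U"
      by (simp add: ultra_rel_iff)
  qed
qed

lemma ultra_rel_mult:
  assumes x: "(x, x') \<in> ultra_rel P U" and y: "(y, y') \<in> ultra_rel P U"
  shows "((\<lambda>i. x i * y i), (\<lambda>i. x' i * y' i)) \<in> ultra_rel P U"
proof -
  have bdd: "x \<in> ell_inf P" "x' \<in> ell_inf P" "y \<in> ell_inf P" "y' \<in> ell_inf P"
    and null: "null_along U (\<lambda>i. x i - x' i)" "null_along U (\<lambda>i. y i - y' i)"
    using x y by (simp_all add: ultra_rel_iff)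
  have "null_along U (\<lambda>i. (x i - x' i) * y i + x' i * (y i - y' i))"
    using null_along_mult_bounded(1)[OF null(1) bdd(3)]
      null_along_mult_bounded(2)[OF null(2) bdd(2)] by (rule null_along_add)
  then show ?thesis
    using bdd by (simp add: ultra_rel_iff ell_inf_mult algebra_simps)
qed

lemma ultra_mult_class:
  assumes x: "x \<in> ell_inf P" and y: "y \<in> ell_inf P"
  shows "ultra_mult P U (ultra_rel P U `` {x}) (ultra_rel P U `` {y})
           = ultra_rel P U `` {\<lambda>i. x i * y i}"
proof -
  let ?r = "ultra_rel P U" and ?xy = "\<lambda>i. x i * y i"
  define S where "S = {(\<lambda>i. x' i * y' i) | x' y'. x' \<in> ?r `` {x} \<and> y' \<in> ?r `` {y}}"
  have same_class: "?r `` {s} = ?r `` {?xy}" if "s \<in> S" for s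
  proof -
    from that obtain x' y' where "s = (\<lambda>i. x' i * y' i)" "(x, x') \<in> ?r" "(y, y') \<in> ?r"
      unfolding S_def by blast
    then have "(?xy, s) \<in> ?r" by (simp add: ultra_rel_mult)
    then show ?thesis
      by (rule equiv_class_eq[OF ultra_rel_equiv, symmetric])
  qed
  have "x \<in> ?r `` {x}" "y \<in> ?r `` {y}"
    using equiv_class_self[OF ultra_rel_equiv] x y by auto
  then have "?xy \<in> S"
    unfolding S_def by blast
  have "?r `` S = (\<Union>s\<in>S. ?r `` {s})"
    by (rule Image_eq_UN)
  also have "\<dots> = ?r `` {?xy}"
    using \<open>?xy \<in> S\<close> same_class by (intro SUP_eq_const) blast+
  finally show ?thesis
    unfolding ultra_mult_def S_def .
qed

lemma ultrapower_unital_if_unital: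
  fixes u :: 'a
  assumes unit: "\<And>x. u * x = x \<and> x * u = x"
  shows "ultrapower_unital P U"
  unfolding ultrapower_unital_def
proof
  let ?r = "ultra_rel P U"
  show "?r `` {\<lambda>i. u} \<in> ultrapower P U"
    unfolding ultrapower_def by (rule quotientI) (rule ell_inf_const)
  show "\<forall>X\<in>ultrapower P U. ultra_mult P U (?r `` {\<lambda>i. u}) X = X \<and>
                          ultra_mult P U X (?r `` {\<lambda>i. u}) = X"
  proof
    fix X assume "X \<in> ultrapower P U"
    then obtain y where X: "X = ?r `` {y}" and y: "y \<in> ell_inf P"
      unfolding ultrapower_def by (rule quotientE)
    have "(\<lambda>i. u * y i) = y" "(\<lambda>i. y i * u) = y"
      using unit by auto
    then show "ultra_mult P U (?r `` {\<lambda>i. u}) X = X \<and> ultra_mult P U X (?r `` {\<lambda>i. u}) = X"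
      unfolding X using ultra_mult_class[OF ell_inf_const y] ultra_mult_class[OF y ell_inf_const]
      by simp
  qed
qed

definition approximate_unit :: "'i filter \<Rightarrow> ('i \<Rightarrow> 'a) \<Rightarrow> bool" where
  "approximate_unit U e \<longleftrightarrow>
     (\<forall>y \<in> ell_inf P. null_along U (\<lambda>i. e i * y i - y i) \<and> null_along U (\<lambda>i. y i * e i - y i))"

lemma approximate_unit_if_ultrapower_unital:
  fixes U :: "'i filter"
  assumes "ultrapower_unital P U"
  obtains e where "e \<in> ell_inf P" "approximate_unit U e"
proof -
  let ?r = "ultra_rel P U"
  obtain E where E: "E \<in> ultrapower P U"
    and unit: "\<forall>X\<in>ultrapower P U. ultra_mult P U E X = X \<and> ultra_mult P U X E = X"
    using assms unfolding ultrapower_unital_def by (rule bexE)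
  obtain e where E_eq: "E = ?r `` {e}" and e: "e \<in> ell_inf P"
    using E unfolding ultrapower_def by (rule quotientE)
  have "approximate_unit U e"
    unfolding approximate_unit_def
  proof
    fix y :: "'i \<Rightarrow> 'a"
    assume y: "y \<in> ell_inf P"
    have "?r `` {y} \<in> ultrapower P U"
      unfolding ultrapower_def using y by (rule quotientI)
    with unit have "ultra_mult P U E (?r `` {y}) = ?r `` {y} \<and> ultra_mult P U (?r `` {y}) E = ?r `` {y}"
      by (rule bspec)
    then have "?r `` {\<lambda>i. e i * y i} = ?r `` {y} \<and> ?r `` {\<lambda>i. y i * e i} = ?r `` {y}"
      unfolding E_eq ultra_mult_class[OF e y] ultra_mult_class[OF y e] .
    then have "((\<lambda>i. e i * y i), y) \<in> ?r" and "((\<lambda>i. y i * e i), y) \<in> ?r"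
      using eq_equiv_class[OF _ ultra_rel_equiv y] by blast+
    then show "null_along U (\<lambda>i. e i * y i - y i) \<and> null_along U (\<lambda>i. y i * e i - y i)"
      by (simp add: ultra_rel_iff)
  qed
  with e show ?thesis
    by (rule that)
qed

text \<open>Apply the hypothesis
  to y (J i), where J i is an index at which the error is not small.\<close>

lemma null_along_uniform:
  fixes f :: "'i \<Rightarrow> 'a \<Rightarrow> 'a"
  assumes null: "\<And>z. z \<in> ell_inf P \<Longrightarrow> null_along U (\<lambda>i. f i (z i) - z i)"
    and y: "y \<in> ell_inf P" and d: "d > 0"
  shows "eventually (\<lambda>i. \<forall>j. P n (f i (y j) - y j) < d) U"
proof -
  define J where "J i = (SOME j. \<not> P n (f i (y j) - y j) < d)" for i
  have "eventually (\<lambda>i. P n (f i (y (J i)) - y (J i)) < d) U"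
    using null_alongD[OF null[OF ell_inf_reindex[OF y]] d] .
  then show ?thesis
  proof (rule eventually_mono)
    fix i assume worst: "P n (f i (y (J i)) - y (J i)) < d"
    show "\<forall>j. P n (f i (y j) - y j) < d"
    proof (rule ccontr)
      assume "\<not> (\<forall>j. P n (f i (y j) - y j) < d)"
      then have "\<exists>j. \<not> P n (f i (y j) - y j) < d"
        by simp
      then have "\<not> P n (f i (y (J i)) - y (J i)) < d"
        unfolding J_def by (rule someI_ex)
      with worst show False
        by contradiction
    qed
  qed
qed

definition cauchy_along :: "'i filter \<Rightarrow> ('i \<Rightarrow> 'a) \<Rightarrow> bool" where
  "cauchy_along U f \<longleftrightarrow> (\<forall>n \<epsilon>. \<epsilon> > 0 \<longrightarrow>
     (\<exists>Q. eventually Q U \<and> (\<forall>i j. Q i \<and> Q j \<longrightarrow> P n (f i - f j) < \<epsilon>)))"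

text \<open>A bounded approximate unit is Cauchy along U: eventually e i and e j both act as
  units on each other, so e i \<approx> e j * e i \<approx> e j.\<close>

lemma approximate_unit_cauchy:
  assumes e: "e \<in> ell_inf P" and approx: "approximate_unit U e"
  shows "cauchy_along U e"
  unfolding cauchy_along_def
proof (intro allI impI)
  fix n and \<epsilon> :: real
  assume "\<epsilon> > 0"
  define Q where
    "Q i \<longleftrightarrow> (\<forall>j. P n (e i * e j - e j) < \<epsilon>/2) \<and> (\<forall>j. P n (e j * e i - e j) < \<epsilon>/2)" for i
  have left: "\<And>z. z \<in> ell_inf P \<Longrightarrow> null_along U (\<lambda>i. e i * z i - z i)"
    and right: "\<And>z. z \<in> ell_inf P \<Longrightarrow> null_along U (\<lambda>i. z i * e i - z i)"
    using approx unfolding approximate_unit_def by blast+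
  have "eventually Q U"
    unfolding Q_def using \<open>\<epsilon> > 0\<close>
    by (intro eventually_conj null_along_uniform[OF left e] null_along_uniform[OF right e]) simp_all
  moreover have "P n (e i - e j) < \<epsilon>" if "Q i" "Q j" for i j
  proof -
    have "P n (e j * e i - e i) < \<epsilon>/2" "P n (e j * e i - e j) < \<epsilon>/2"
      using that unfolding Q_def by blast+
    moreover have "P n (e i - e j) \<le> P n (e j * e i - e i) + P n (e j * e i - e j)"
      using sn_diff_triangle[of n "e i" "e j" "e j * e i"] sn_diff_commute[of n "e i"] by simp
    ultimately show ?thesis by linarith
  qed
  ultimately show "\<exists>Q. eventually Q U \<and> (\<forall>i j. Q i \<and> Q j \<longrightarrow> P n (e i - e j) < \<epsilon>)"
    by blast
qed

text \<open>Completeness along a proper filter: pick indices s N lying in the first N + 1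
  Cauchy sets; the sequence f (s N) is Cauchy, and its limit is the limit of f along U.\<close>

lemma cauchy_along_converges:
  assumes U: "U \<noteq> bot" and cauchy: "cauchy_along U f"
  obtains L where "null_along U (\<lambda>i. f i - L)"
proof -
  define r :: "nat \<Rightarrow> real" where "r N = inverse (real (Suc N))" for N
  have r_pos: "r N > 0" for N
    unfolding r_def by simp
  have r_small: "\<exists>N\<ge>n. r N < \<epsilon>" if \<epsilon>: "\<epsilon> > 0" for n \<epsilon>
  proof -
    obtain N where "inverse (real (Suc N)) < \<epsilon>"
      using reals_Archimedean[OF \<epsilon>] by blast
    moreover have "r (max n N) \<le> inverse (real (Suc N))"
      unfolding r_def by (simp add: le_imp_inverse_le)
    ultimately show ?thesis
      by (intro exI[of _ "max n N"]) simp
  qed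
  have "\<forall>N. \<exists>Q. eventually Q U \<and> (\<forall>i j. Q i \<and> Q j \<longrightarrow> P N (f i - f j) < r N)"
    using cauchy r_pos unfolding cauchy_along_def by simp
  then obtain Q where Q: "\<forall>N. eventually (Q N) U \<and> (\<forall>i j. Q N i \<and> Q N j \<longrightarrow> P N (f i - f j) < r N)"
    by (rule choice[THEN exE])
  then have Q_ev: "\<And>N. eventually (Q N) U"
    and Q_close: "\<And>N i j. Q N i \<Longrightarrow> Q N j \<Longrightarrow> P N (f i - f j) < r N"
    by simp_all
  define s where "s N = (SOME i. \<forall>k\<in>{..N}. Q k i)" for N
  have s: "Q k (s N)" if "k \<le> N" for k N
  proof -
    have "eventually (\<lambda>i. \<forall>k\<in>{..N}. Q k i) U"
      by (rule eventually_ball_finite) (simp_all add: Q_ev)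
    then have "\<exists>i. \<forall>k\<in>{..N}. Q k i"
      by (rule eventually_happens'[OF U])
    then have "\<forall>k\<in>{..N}. Q k (s N)"
      unfolding s_def by (rule someI_ex)
    with that show ?thesis
      by simp
  qed
  have s_close: "P n (f (s m) - f i) < r N" if "n \<le> N" "N \<le> m" "Q N i" for n N m i
  proof -
    have "P N (f (s m) - f i) < r N"
      using Q_close s[OF \<open>N \<le> m\<close>] \<open>Q N i\<close> .
    with sn_mono[OF \<open>n \<le> N\<close>] show ?thesis
      by (rule le_less_trans)
  qed
  have "\<exists>N. \<forall>m\<ge>N. \<forall>k\<ge>N. P n (f (s m) - f (s k)) < \<epsilon>" if \<epsilon>: "\<epsilon> > 0" for n \<epsilon>
  proof -
    obtain N where N: "n \<le> N" "r N < \<epsilon>"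
      using r_small[OF \<epsilon>] by blast
    have "P n (f (s m) - f (s k)) < \<epsilon>" if "N \<le> m" "N \<le> k" for m k
      using s_close[OF N(1) that(1) s[OF that(2)]] N(2) by linarith
    then show ?thesis
      by blast
  qed
  then have "\<exists>L. \<forall>n. (\<lambda>m. P n (f (s m) - L)) \<longlonglongrightarrow> 0"
    by (rule sn_complete)
  then obtain L where L: "\<forall>n. (\<lambda>m. P n (f (s m) - L)) \<longlonglongrightarrow> 0"
    by (rule exE)
  have "eventually (\<lambda>i. P n (f i - L) < \<epsilon>) U" if \<epsilon>: "\<epsilon> > 0" for n \<epsilon>
  proof -
    have half: "\<epsilon>/2 > 0"
      using \<epsilon> by simp
    obtain N where N: "n \<le> N" "r N < \<epsilon>/2"
      using r_small[OF half] by blast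
    obtain m0 where m0: "\<forall>m\<ge>m0. norm (P n (f (s m) - L) - 0) < \<epsilon>/2"
      using L half unfolding LIMSEQ_iff by blast
    define m where "m = max N m0"
    have "norm (P n (f (s m) - L) - 0) < \<epsilon>/2"
      using m0 unfolding m_def by simp
    then have L_close: "P n (f (s m) - L) < \<epsilon>/2"
      by simp
    show ?thesis
      using Q_ev[of N]
    proof (rule eventually_mono)
      fix i assume "Q N i"
      have "P n (f (s m) - f i) < r N"
        using s_close[OF N(1) _ \<open>Q N i\<close>] unfolding m_def by simp
      then have "P n (f i - f (s m)) < \<epsilon>/2"
        using N(2) sn_diff_commute[of n "f i" "f (s m)"] by linarith
      then show "P n (f i - L) < \<epsilon>"
        using sn_diff_triangle[of n "f i" L "f (s m)"] L_close by linarith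
    qed
  qed
  then show ?thesis
    using that unfolding null_along_def by blast
qed

text \<open>The limit along U of an approximate unit is a unit: L * x - x equals
  (e i * x - x) - (e i - L) * x for every i, a U-null family, hence it is 0.\<close>

lemma approximate_unit_limit_is_unit:
  assumes U: "U \<noteq> bot" and approx: "approximate_unit U e" and lim: "null_along U (\<lambda>i. e i - L)"
  shows "L * x = x \<and> x * L = x"
proof -
  have x: "(\<lambda>i. x) \<in> ell_inf P"
    by (rule ell_inf_const)
  have left: "null_along U (\<lambda>i. e i * x - x)" and right: "null_along U (\<lambda>i. x * e i - x)"
    using bspec[OF approx[unfolded approximate_unit_def] x] by simp_all
  have "null_along U (\<lambda>i. (e i * x - x) + - ((e i - L) * x))"
    by (rule null_along_add[OF left null_along_minus[OF null_along_mult_bounded(1)[OF lim x]]])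
  moreover have "null_along U (\<lambda>i. (x * e i - x) + - (x * (e i - L)))"
    by (rule null_along_add[OF right null_along_minus[OF null_along_mult_bounded(2)[OF lim x]]])
  ultimately have "null_along U (\<lambda>i. L * x - x)" and "null_along U (\<lambda>i. x * L - x)"
    by (simp_all add: algebra_simps)
  then have "L * x - x = 0" and "x * L - x = 0"
    using null_along_const[OF U] by blast+
  then show ?thesis
    by simp
qed

end

theorem proposition3p1:
  fixes P :: "nat \<Rightarrow> 'a::real_algebra \<Rightarrow> real" and U :: "'i filter"
  assumes "frechet_algebra P"
    and "is_ultrafilter U"
    and "countably_incomplete U"
  shows "ultrapower_unital P U \<longleftrightarrow> algebra_unital TYPE('a)"
proof
  assume "ultrapower_unital P U"
  then obtain e where e: "e \<in> ell_inf P" "approximate_unit P U e"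
    using approximate_unit_if_ultrapower_unital[OF assms(1)] by blast
  have U: "U \<noteq> bot"
    using assms(2) unfolding is_ultrafilter_def by blast
  obtain L where "null_along P U (\<lambda>i. e i - L)"
    using cauchy_along_converges[OF assms(1) U approximate_unit_cauchy[OF assms(1) e]] by blast
  then have "\<forall>x. L * x = x \<and> x * L = x"
    using approximate_unit_limit_is_unit[OF assms(1) U e(2)] by blast
  then show "algebra_unital TYPE('a)"
    unfolding algebra_unital_def by blast
next
  assume "algebra_unital TYPE('a)"
  then obtain u :: 'a where "\<And>x. u * x = x \<and> x * u = x"
    unfolding algebra_unital_def by blast
  then show "ultrapower_unital P U"
    by (rule ultrapower_unital_if_unital[OF assms(1)])
qed

end
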